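(* Let $\sigma\in S_t$, $p\in S_k$ and $1\le s\le k$. (i) If for each $a\le s$ the word $p_ap_{a+1}\cdots p_{\min(a+t-1,k)}$ is not order-isomorphic to $\sigma_1\sigma_2\cdots\sigma_{\min(t,k-a+1)}$, then $\{1,2,\dots,s\}$ is reversibly deletable for $p$ with respect to $\{(\sigma,[t-1])\}$. (ii) If for each $a\le s$ the word $p_ap_{a+1}\cdots p_{\min(a+t-2,k)}$ is not order-isomorphic to $\sigma_1\sigma_2\cdots\sigma_{\min(t-1,k-a+1)}$, then $\{1,2,\dots,s\}$ is reversibly deletable for $p$ with respect to $\{(\sigma,[t-2])\}$.
   Context: Two words of distinct integers are order-isomorphic if they reduce to the same permutation. A vincular pattern $(\sigma,X)$, $\sigma\in S_\ell$, $X\subseteq[\ell-1]$, is contained in $\pi$ if some subsequence $\pi_{i_1}\cdots\pi_{i_\ell}$ ($i_1<\dots<i_\ell$) is order-isomorphic to $\sigma$ with $i_{x+1}=i_x+1$ for $x\in X$. For $p\in S_k$ and $w\in[n]^k$ with distinct letters order-isomorphic to $p$, $S_n^B(p;w)$ is the set of $B$-avoiding $\pi\in S_n$ with $\pi_i=w_i$ ($i\le k$). $d_R$ deletes entries in positions $R$ and reduces (for words: subtract from each remaining letter the number of deleted letters smaller than it). $R\subseteq[k]$ is reversibly deletable for $p$ w.r.t. $B$ if for every $n$ and $w$ with $S_n^B(p;w)\ne\emptyset$, $d_R$ is a bijection $S_n^B(p;w)\to S_{n-|R|}^B(d_R(p);d_R(w))$. *)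

theory Defs
  imports Main
begin

(* Words are lists of naturals; positions are 1-based in the paper, list indices are 0-based:
   the paper's u_i is  u ! (i - 1). *)

definition perms :: "nat \<Rightarrow> nat list set" where
  "perms n = {\<pi>. length \<pi> = n \<and> distinct \<pi> \<and> set \<pi> = {1..n}}"

definition order_iso :: "nat list \<Rightarrow> nat list \<Rightarrow> bool" where
  "order_iso u v \<longleftrightarrow> length u = length v \<and>
     (\<forall>i<length u. \<forall>j<length u. (u ! i < u ! j) = (v ! i < v ! j))"

(* vincular pattern (sigma, X), X a set of 1-based adjacency requirements:
   pi contains it iff there are positions i_1<...<i_l (here the 0-based list is)
   with pi_{i_1}...pi_{i_l} order-isomorphic to sigma and i_{x+1} = i_x + 1 for x in X *)
definition contains :: "nat list \<Rightarrow> nat list \<times> nat set \<Rightarrow> bool" where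
  "contains \<pi> P \<longleftrightarrow> (case P of (\<sigma>, X) \<Rightarrow>
     (\<exists>is. length is = length \<sigma> \<and> sorted_wrt (<) is \<and> (\<forall>i\<in>set is. i < length \<pi>) \<and>
        order_iso (map ((!) \<pi>) is) \<sigma> \<and>
        (\<forall>x\<in>X. is ! x = is ! (x - 1) + 1)))"

definition avoids :: "(nat list \<times> nat set) set \<Rightarrow> nat list \<Rightarrow> bool" where
  "avoids B \<pi> \<longleftrightarrow> (\<forall>P\<in>B. \<not> contains \<pi> P)"

definition Sset :: "nat \<Rightarrow> (nat list \<times> nat set) set \<Rightarrow> nat list \<Rightarrow> nat list set" where
  "Sset n B w = {\<pi> \<in> perms n. avoids B \<pi> \<and> (\<forall>i\<in>{1..length w}. \<pi> ! (i - 1) = w ! (i - 1))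
                     \<and> length w \<le> n}"

definition del :: "nat set \<Rightarrow> nat list \<Rightarrow> nat list" where
  "del R u = (let deleted = [u ! (i - 1). i \<leftarrow> [1..<length u + 1], i \<in> R];
                  kept = [u ! (i - 1). i \<leftarrow> [1..<length u + 1], i \<notin> R]
              in map (\<lambda>x. x - length (filter (\<lambda>y. y < x) deleted)) kept)"

definition rev_deletable :: "nat set \<Rightarrow> nat list \<Rightarrow> (nat list \<times> nat set) set \<Rightarrow> bool" where
  "rev_deletable R p B \<longleftrightarrow> R \<subseteq> {1..length p} \<and>
     (\<forall>n w. length w = length p \<and> set w \<subseteq> {1..n} \<and> distinct w \<and> order_iso w p \<and>
            Sset n B w \<noteq> {} \<longrightarrow>
            bij_betw (del R) (Sset n B w) (Sset (n - card R) B (del R w)))"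

end

theory Submission
  imports Defs
begin

(* Deleting the prefix L of a permutation of [n] is the map
       pi |-> map (squeeze L) (drop s pi), where squeeze L is an order-preserving bijection from
       [n] - set L onto [n - s].  So it is a bijection from the permutations of [n] starting with L
       onto the permutations of [n - s], matching prefix w with prefix d(w); hence {1..s} is
       reversibly deletable once deletion preserves avoidance (rev_deletable_prefixI).
   (2) Patterns.  The reduced permutation contains a pattern iff pi has an occurrence after
       position s.  An occurrence of (sigma, {1..m-1}) starting at a <= s has its first m letters
       on consecutive positions, so p_a p_(a+1) ... would be order-isomorphic to a prefix of sigma,
       which the hypothesis forbids; so deletion preserves avoidance (avoidance_preserved).
   The theorem is the instance m = t (part i) and m = t - 1 (part ii). *)

(* squeeze L x is the value of the letter x after the letters of L are deleted and the
   remaining letters are standardised: x minus the number of letters of L below x. *)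
definition squeeze :: "nat list \<Rightarrow> nat \<Rightarrow> nat" where
  "squeeze L x = x - length (filter (\<lambda>y. y < x) L)"

lemma concat_map_shifted_positions:
  "[u ! (i - 1). i \<leftarrow> map Suc [a..<b], P i] = map ((!) u) (filter (\<lambda>i. P (Suc i)) [a..<b])"
  by (induct b) auto

lemma del_first_letters: "del {1..s} u = map (squeeze (take s u)) (drop s u)"
proof -
  have upt: "[1..<length u + 1] = map Suc [0..<length u]" by (simp add: map_Suc_upt)
  have "filter (\<lambda>i. Suc i \<in> {1..s}) [0..<length u] = [0..<min s (length u)]"
    by (induct u rule: rev_induct) (auto simp: min_def)
  moreover have "filter (\<lambda>i. Suc i \<notin> {1..s}) [0..<length u] = [s..<length u]"
    by (induct u rule: rev_induct) auto
  moreover have "map ((!) u) [0..<min s (length u)] = take s u"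
    by (rule nth_equalityI) auto
  moreover have "map ((!) u) [s..<length u] = drop s u"
    by (rule nth_equalityI) auto
  ultimately show ?thesis
    unfolding del_def Let_def upt concat_map_shifted_positions squeeze_def by simp
qed

lemma squeeze_count:
  "distinct L \<Longrightarrow> squeeze L x = x - card {y \<in> set L. y < x}"
  by (simp add: squeeze_def distinct_length_filter Int_def conj_commute)

(* Between two letters outside L, squeezing removes at most the y - x - 1 values strictly
   between them, so the order of letters outside L is preserved. *)
lemma squeeze_strict_mono:
  assumes L: "distinct L" and xy: "x \<notin> set L" "x < y"
  shows "squeeze L x < squeeze L y"
proof -
  have "{z \<in> set L. z < y} \<subseteq> {z \<in> set L. z < x} \<union> {x<..<y}"
    using xy by (auto simp: not_less order_le_less)
  hence "card {z \<in> set L. z < y} \<le> card ({z \<in> set L. z < x} \<union> {x<..<y})"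
    by (intro card_mono) auto
  also have "\<dots> \<le> card {z \<in> set L. z < x} + card {x<..<y}"
    by (rule card_Un_le)
  finally have "card {z \<in> set L. z < y} \<le> card {z \<in> set L. z < x} + (y - x - 1)" by simp
  moreover have "card {z \<in> set L. z < x} \<le> card {..<x}"
    by (intro card_mono) auto
  ultimately show ?thesis
    using xy(2) by (simp add: squeeze_count[OF L])
qed

lemma squeeze_less_iff:
  assumes "distinct L" "x \<notin> set L" "y \<notin> set L"
  shows "(squeeze L x < squeeze L y) = (x < y)"
  using squeeze_strict_mono[OF assms(1,2), of y] squeeze_strict_mono[OF assms(1,3), of x]
  by (cases x y rule: linorder_cases) auto

lemma squeeze_inj: "distinct L \<Longrightarrow> inj_on (squeeze L) (- set L)"
proof (rule inj_onI)
  fix x y assume "distinct L" "x \<in> - set L" "y \<in> - set L" "squeeze L x = squeeze L y"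
  thus "x = y" using squeeze_less_iff[of L x y] squeeze_less_iff[of L y x] by auto
qed

lemma squeeze_bij:
  assumes L: "distinct L" "set L \<subseteq> {1..n}"
  shows "bij_betw (squeeze L) ({1..n} - set L) {1..n - length L}"
proof -
  let ?C = "{1..n} - set L"
  have range: "squeeze L x \<in> {1..n - length L}" if x: "x \<in> ?C" for x
  proof -
    have "{y \<in> set L. y < x} \<subseteq> {1..<x}" using L(2) by auto
    hence "card {y \<in> set L. y < x} \<le> card {1..<x}"
      by (intro card_mono) auto
    hence below: "card {y \<in> set L. y < x} \<le> x - 1" by simp
    have "set L \<subseteq> {y \<in> set L. y < x} \<union> {x<..n}"
    proof
      fix y assume "y \<in> set L"
      hence "y \<noteq> x" "y \<le> n" using L(2) x by auto
      thus "y \<in> {y \<in> set L. y < x} \<union> {x<..n}" using \<open>y \<in> set L\<close> by auto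
    qed
    hence "card (set L) \<le> card ({y \<in> set L. y < x} \<union> {x<..n})"
      by (intro card_mono) auto
    also have "\<dots> \<le> card {y \<in> set L. y < x} + card {x<..n}"
      by (rule card_Un_le)
    finally have "card (set L) \<le> card {y \<in> set L. y < x} + card {x<..n}" .
    hence "length L \<le> card {y \<in> set L. y < x} + (n - x)" by (simp add: distinct_card[OF L(1)])
    moreover have "1 \<le> x" "x \<le> n" using x by auto
    ultimately show ?thesis using below unfolding squeeze_count[OF L(1)] by auto
  qed
  have inj: "inj_on (squeeze L) ?C"
    using squeeze_inj[OF L(1)] by (rule inj_on_subset) auto
  have "card ?C = n - length L"
    using L by (simp add: card_Diff_subset distinct_card)
  hence "squeeze L ` ?C = {1..n - length L}"
    using range card_image[OF inj] by (intro card_subset_eq) auto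
  thus ?thesis using inj by (simp add: bij_betw_def)
qed

lemma perms_length: "\<pi> \<in> perms n \<Longrightarrow> length \<pi> = n"
  by (simp add: perms_def)

lemma perms_altdef: "perms n = {\<pi>. distinct \<pi> \<and> set \<pi> = {1..n}}"
  unfolding perms_def by (auto dest: distinct_card)

lemma map_bij_arrangements:
  assumes "bij_betw f A B"
  shows "bij_betw (map f) {v. distinct v \<and> set v = A} {v. distinct v \<and> set v = B}"
proof (rule bij_betw_byWitness[where f' = "map (inv_into A f)"])
  have inj: "inj_on f A" and surj: "f ` A = B" using assms by (auto simp: bij_betw_def)
  have inv: "bij_betw (inv_into A f) B A" by (rule bij_betw_inv_into[OF assms])
  show "\<forall>v\<in>{v. distinct v \<and> set v = A}. map (inv_into A f) (map f v) = v"
    using inv_into_f_f[OF inj] by (auto intro!: map_idI)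
  show "\<forall>v\<in>{v. distinct v \<and> set v = B}. map f (map (inv_into A f) v) = v"
    using f_inv_into_f[of _ f A] surj by (auto intro!: map_idI)
  show "map f ` {v. distinct v \<and> set v = A} \<subseteq> {v. distinct v \<and> set v = B}"
    using inj surj by (auto simp: distinct_map)
  show "map (inv_into A f) ` {v. distinct v \<and> set v = B} \<subseteq> {v. distinct v \<and> set v = A}"
    using inv by (auto simp: distinct_map bij_betw_def)
qed

lemma drop_bij_arrangements:
  assumes "distinct L" "set L \<subseteq> U"
  shows "bij_betw (drop (length L)) {\<pi>. distinct \<pi> \<and> set \<pi> = U \<and> take (length L) \<pi> = L}
                                    {v. distinct v \<and> set v = U - set L}"
proof (rule bij_betw_byWitness[where f' = "(@) L"])
  show "\<forall>\<pi>\<in>{\<pi>. distinct \<pi> \<and> set \<pi> = U \<and> take (length L) \<pi> = L}. L @ drop (length L) \<pi> = \<pi>"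
    by (metis (mono_tags) append_take_drop_id mem_Collect_eq)
  show "\<forall>v\<in>{v. distinct v \<and> set v = U - set L}. drop (length L) (L @ v) = v" by simp
  show "drop (length L) ` {\<pi>. distinct \<pi> \<and> set \<pi> = U \<and> take (length L) \<pi> = L}
          \<subseteq> {v. distinct v \<and> set v = U - set L}"
  proof clarify
    fix \<pi> :: "'a list" assume "distinct \<pi>" "take (length L) \<pi> = L"
    hence "distinct (L @ drop (length L) \<pi>)" by (metis append_take_drop_id)
    moreover have "set \<pi> = set L \<union> set (drop (length L) \<pi>)"
      using \<open>take (length L) \<pi> = L\<close> by (metis append_take_drop_id set_append)
    ultimately show "distinct (drop (length L) \<pi>) \<and> set (drop (length L) \<pi>) = set \<pi> - set L"
      by auto
  qed
  show "(@) L ` {v. distinct v \<and> set v = U - set L}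
          \<subseteq> {\<pi>. distinct \<pi> \<and> set \<pi> = U \<and> take (length L) \<pi> = L}"
    using assms by auto
qed

lemma del_prefix_bij:
  assumes L: "distinct L" "set L \<subseteq> {1..n}"
  shows "bij_betw (del {1..length L}) {\<pi> \<in> perms n. take (length L) \<pi> = L} (perms (n - length L))"
proof -
  let ?A = "{\<pi> \<in> perms n. take (length L) \<pi> = L}"
  have "bij_betw (drop (length L)) ?A {v. distinct v \<and> set v = {1..n} - set L}"
    using drop_bij_arrangements[OF L] unfolding perms_altdef by (simp add: conj_assoc)
  moreover have "bij_betw (map (squeeze L)) {v. distinct v \<and> set v = {1..n} - set L} (perms (n - length L))"
    using map_bij_arrangements[OF squeeze_bij[OF L]] unfolding perms_altdef .
  ultimately have "bij_betw (map (squeeze L) \<circ> drop (length L)) ?A (perms (n - length L))"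
    by (rule bij_betw_trans)
  moreover have "del {1..length L} \<pi> = (map (squeeze L) \<circ> drop (length L)) \<pi>" if "\<pi> \<in> ?A" for \<pi>
    using that del_first_letters[of "length L" \<pi>] by simp
  ultimately show ?thesis by (rule bij_betw_cong[THEN iffD2, rotated])
qed

(* When pi and w agree on their first s letters, pi starts with w exactly when the reduced
   permutation starts with the reduced word, since squeezing is injective off the prefix. *)
lemma del_prefix_take_iff:
  assumes \<pi>: "distinct \<pi>" and w: "distinct w" and s: "s \<le> length w"
    and common: "take s \<pi> = take s w"
  shows "take (length w) \<pi> = w \<longleftrightarrow> take (length w - s) (del {1..s} \<pi>) = del {1..s} w"
proof -
  define F where "F = squeeze (take s w)"
  have inj: "inj_on F (- set (take s w))"
    unfolding F_def using w by (intro squeeze_inj) simp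
  have "set (drop s (take (length w) \<pi>)) \<subseteq> - set (take s w)"
  proof -
    have "set (drop s (take (length w) \<pi>)) \<subseteq> set (drop s \<pi>)"
      by (simp add: drop_take set_take_subset)
    thus ?thesis using common set_take_disj_set_drop_if_distinct[OF \<pi>, of s s] by auto
  qed
  moreover have "set (drop s w) \<subseteq> - set (take s w)"
    using set_take_disj_set_drop_if_distinct[OF w, of s s] by auto
  ultimately have "inj_on F (set (drop s (take (length w) \<pi>)) \<union> set (drop s w))"
    by (intro inj_on_subset[OF inj]) auto
  hence "map F (drop s (take (length w) \<pi>)) = map F (drop s w)
                   \<longleftrightarrow> drop s (take (length w) \<pi>) = drop s w"
    by (rule inj_on_map_eq_map)
  moreover have "take (length w - s) (del {1..s} \<pi>) = map F (drop s (take (length w) \<pi>))"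
    unfolding del_first_letters common F_def by (simp add: take_map drop_take)
  moreover have "del {1..s} w = map F (drop s w)" unfolding del_first_letters F_def ..
  moreover have "take (length w) \<pi> = w \<longleftrightarrow> drop s (take (length w) \<pi>) = drop s w"
  proof
    have "take s (take (length w) \<pi>) = take s w" using s common by (simp add: min_absorb1)
    moreover assume "drop s (take (length w) \<pi>) = drop s w"
    ultimately show "take (length w) \<pi> = w" by (metis append_take_drop_id)
  qed simp
  ultimately show ?thesis by simp
qed

lemma prefix_iff_nth:
  assumes "length w \<le> length \<pi>"
  shows "(\<forall>i\<in>{1..length w}. \<pi> ! (i - 1) = w ! (i - 1)) \<longleftrightarrow> take (length w) \<pi> = w"
proof -
  have "(\<forall>i\<in>{1..length w}. \<pi> ! (i - 1) = w ! (i - 1)) \<longleftrightarrow> (\<forall>i<length w. \<pi> ! i = w ! i)"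
  proof
    assume h: "\<forall>i\<in>{1..length w}. \<pi> ! (i - 1) = w ! (i - 1)"
    show "\<forall>i<length w. \<pi> ! i = w ! i"
    proof (intro allI impI)
      fix i assume "i < length w"
      hence "Suc i \<in> {1..length w}" by simp
      with h show "\<pi> ! i = w ! i" by fastforce
    qed
  next
    assume h: "\<forall>i<length w. \<pi> ! i = w ! i"
    show "\<forall>i\<in>{1..length w}. \<pi> ! (i - 1) = w ! (i - 1)"
    proof
      fix i assume "i \<in> {1..length w}"
      hence "i - 1 < length w" by auto
      with h show "\<pi> ! (i - 1) = w ! (i - 1)" by blast
    qed
  qed
  also have "\<dots> \<longleftrightarrow> take (length w) \<pi> = w"
    using assms by (simp add: list_eq_iff_nth_eq)
  finally show ?thesis .
qed

lemma Sset_eq: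
  assumes "length w \<le> n"
  shows "Sset n B w = {\<pi> \<in> perms n. take (length w) \<pi> = w \<and> avoids B \<pi>}"
proof -
  have "(\<forall>i\<in>{1..length w}. \<pi> ! (i - 1) = w ! (i - 1)) \<longleftrightarrow> take (length w) \<pi> = w"
    if "\<pi> \<in> perms n" for \<pi>
    using prefix_iff_nth[of w \<pi>] assms perms_length[OF that] by simp
  thus ?thesis using assms unfolding Sset_def by auto
qed

(* Reduction of reversible deletability of {1..s} to a pattern-specific condition: deleting the
   prefix must preserve B-avoidance of every permutation starting with a word order-isomorphic
   to p.  The bijection then restricts from del_prefix_bij. *)
lemma rev_deletable_prefixI:
  assumes s: "s \<le> length p"
    and preserves: "\<And>w \<pi>. order_iso w p \<Longrightarrow> distinct \<pi> \<Longrightarrow> take (length p) \<pi> = w \<Longrightarrow>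
      avoids B (del {1..s} \<pi>) = avoids B \<pi>"
  shows "rev_deletable {1..s} p B"
  unfolding rev_deletable_def
proof (intro conjI allI impI)
  show "{1..s} \<subseteq> {1..length p}" using s by auto
  fix n w
  assume "length w = length p \<and> set w \<subseteq> {1..n} \<and> distinct w \<and> order_iso w p \<and> Sset n B w \<noteq> {}"
  hence lw: "length w = length p" and sw: "set w \<subseteq> {1..n}" and w: "distinct w"
    and wp: "order_iso w p" by auto
  define L where "L = take s w"
  have L: "distinct L" "set L \<subseteq> {1..n}" "length L = s"
    using w sw s lw set_take_subset[of s w] by (auto simp: L_def)
  have "card (set w) \<le> card {1..n}" using sw by (intro card_mono) auto
  hence kn: "length w \<le> n" using w by (simp add: distinct_card)
  have ldw: "length (del {1..s} w) = length w - s" unfolding del_first_letters by simp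
  have "bij_betw (del {1..s}) {\<pi> \<in> {\<pi> \<in> perms n. take s \<pi> = L}. take (length w) \<pi> = w \<and> avoids B \<pi>}
          {\<tau> \<in> perms (n - s). take (length w - s) \<tau> = del {1..s} w \<and> avoids B \<tau>}"
  proof (rule bij_betw_Collect)
    show "bij_betw (del {1..s}) {\<pi> \<in> perms n. take s \<pi> = L} (perms (n - s))"
      using del_prefix_bij[OF L(1,2)] L(3) by simp
    fix \<pi> assume \<pi>: "\<pi> \<in> {\<pi> \<in> perms n. take s \<pi> = L}"
    hence "take (length w) \<pi> = w \<longleftrightarrow> take (length w - s) (del {1..s} \<pi>) = del {1..s} w"
      using w s lw by (intro del_prefix_take_iff) (auto simp: perms_def L_def)
    thus "(take (length w - s) (del {1..s} \<pi>) = del {1..s} w \<and> avoids B (del {1..s} \<pi>)) \<longleftrightarrow>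
          (take (length w) \<pi> = w \<and> avoids B \<pi>)"
      using preserves[OF wp] \<pi> lw by (auto simp: perms_def)
  qed
  moreover have "{\<pi> \<in> {\<pi> \<in> perms n. take s \<pi> = L}. take (length w) \<pi> = w \<and> avoids B \<pi>}
                 = Sset n B w"
    using s lw kn by (auto simp: Sset_eq L_def min_absorb1)
  moreover have "{\<tau> \<in> perms (n - s). take (length w - s) \<tau> = del {1..s} w \<and> avoids B \<tau>}
                 = Sset (n - card {1..s}) B (del {1..s} w)"
    using Sset_eq[of "del {1..s} w" "n - s" B] kn ldw by simp
  ultimately show "bij_betw (del {1..s}) (Sset n B w) (Sset (n - card {1..s}) B (del {1..s} w))"
    by simp
qed

lemma order_iso_sym: "order_iso u v \<Longrightarrow> order_iso v u"
  unfolding order_iso_def by auto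

lemma order_iso_trans: "order_iso u v \<Longrightarrow> order_iso v w \<Longrightarrow> order_iso u w"
  unfolding order_iso_def by auto

lemma order_iso_take: "order_iso u v \<Longrightarrow> order_iso (take l u) (take l v)"
  unfolding order_iso_def by auto

lemma order_iso_drop: "order_iso u v \<Longrightarrow> order_iso (drop l u) (drop l v)"
  unfolding order_iso_def by auto

lemma order_iso_map:
  "(\<And>x y. x \<in> set u \<Longrightarrow> y \<in> set u \<Longrightarrow> (f x < f y) = (x < y)) \<Longrightarrow> order_iso (map f u) u"
  unfolding order_iso_def by auto

definition occurrence :: "nat list \<Rightarrow> nat list \<Rightarrow> nat set \<Rightarrow> nat list \<Rightarrow> bool" where
  "occurrence \<pi> \<sigma> X is \<longleftrightarrow> length is = length \<sigma> \<and> sorted_wrt (<) is \<and> (\<forall>i\<in>set is. i < length \<pi>) \<and>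
     order_iso (map ((!) \<pi>) is) \<sigma> \<and> (\<forall>x\<in>X. is ! x = is ! (x - 1) + 1)"

lemma contains_iff_occurrence: "contains \<pi> (\<sigma>, X) \<longleftrightarrow> (\<exists>is. occurrence \<pi> \<sigma> X is)"
  unfolding contains_def occurrence_def by simp

lemma occurrence_map:
  assumes F: "\<And>x y. x \<in> set u \<Longrightarrow> y \<in> set u \<Longrightarrow> (F x < F y) = (x < y)"
  shows "occurrence (map F u) \<sigma> X is \<longleftrightarrow> occurrence u \<sigma> X is"
proof -
  have "order_iso (map ((!) (map F u)) is) \<sigma> \<longleftrightarrow> order_iso (map ((!) u) is) \<sigma>"
    if bounds: "\<forall>i\<in>set is. i < length u"
  proof -
    have "map ((!) (map F u)) is = map F (map ((!) u) is)" using bounds by simp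
    moreover have "order_iso (map F (map ((!) u) is)) (map ((!) u) is)"
      using bounds by (intro order_iso_map F) auto
    ultimately show ?thesis by (metis order_iso_sym order_iso_trans)
  qed
  thus ?thesis unfolding occurrence_def by auto
qed

lemma occurrence_drop:
  assumes X: "\<forall>x\<in>X. x < length \<sigma>"
  shows "occurrence (drop s \<pi>) \<sigma> X is \<longleftrightarrow> occurrence \<pi> \<sigma> X (map ((+) s) is)"
proof (cases "length is = length \<sigma> \<and> (\<forall>i\<in>set is. s + i < length \<pi>)")
  case True
  hence entries: "map ((!) (drop s \<pi>)) is = map ((!) \<pi>) (map ((+) s) is)" by auto
  have "map ((+) s) is ! x = map ((+) s) is ! (x - 1) + 1 \<longleftrightarrow> is ! x = is ! (x - 1) + 1"
    if "x \<in> X" for x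
    using X True that by auto
  thus ?thesis using True unfolding occurrence_def entries by (auto simp: sorted_wrt_map)
next
  case False
  hence "\<not> occurrence (drop s \<pi>) \<sigma> X is" "\<not> occurrence \<pi> \<sigma> X (map ((+) s) is)"
    unfolding occurrence_def by fastforce+
  thus ?thesis by blast
qed

lemma occurrence_initial_factor:
  assumes occ: "occurrence \<pi> \<sigma> {1..m - 1} is" and m: "0 < m" "m \<le> length \<sigma>"
  shows "order_iso (take m (drop (is ! 0) \<pi>)) (take m \<sigma>)"
proof -
  have len: "length is = length \<sigma>" and bounds: "\<forall>i\<in>set is. i < length \<pi>"
    and iso: "order_iso (map ((!) \<pi>) is) \<sigma>" and adj: "\<forall>x\<in>{1..m - 1}. is ! x = is ! (x - 1) + 1"
    using occ by (auto simp: occurrence_def)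
  have consec: "is ! j = is ! 0 + j" if "j < m" for j
    using that
  proof (induction j)
    case (Suc j)
    hence "Suc j \<in> {1..m - 1}" by auto
    with adj Suc show ?case by fastforce
  qed simp
  have "is ! (m - 1) < length \<pi>" using bounds len m by auto
  hence room: "is ! 0 + m \<le> length \<pi>" using consec[of "m - 1"] m by simp
  have "take m (drop (is ! 0) \<pi>) = take m (map ((!) \<pi>) is)"
  proof (rule nth_equalityI)
    show "length (take m (drop (is ! 0) \<pi>)) = length (take m (map ((!) \<pi>) is))"
      using room len m by simp
    fix j assume "j < length (take m (drop (is ! 0) \<pi>))"
    hence j: "j < m" using room by simp
    thus "take m (drop (is ! 0) \<pi>) ! j = take m (map ((!) \<pi>) is) ! j"
      using consec[OF j] room len m by simp
  qed
  thus ?thesis using order_iso_take[OF iso] by simp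
qed

(* On a word of distinct letters, deleting a prefix acts on the suffix by an order-preserving
   relabelling, so it has the same occurrences as the suffix. *)
lemma occurrence_del_prefix:
  assumes "distinct \<pi>"
  shows "occurrence (del {1..s} \<pi>) \<sigma> X is \<longleftrightarrow> occurrence (drop s \<pi>) \<sigma> X is"
proof -
  have "del {1..s} \<pi> = map (squeeze (take s \<pi>)) (drop s \<pi>)" by (rule del_first_letters)
  moreover have "set (take s \<pi>) \<inter> set (drop s \<pi>) = {}"
    using assms by (simp add: set_take_disj_set_drop_if_distinct)
  hence "(squeeze (take s \<pi>) x < squeeze (take s \<pi>) y) = (x < y)"
    if "x \<in> set (drop s \<pi>)" "y \<in> set (drop s \<pi>)" for x y
    using that assms by (intro squeeze_less_iff) auto
  ultimately show ?thesis by (simp add: occurrence_map)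
qed

lemma contains_del_prefix_iff:
  assumes \<pi>: "distinct \<pi>" and X: "\<forall>x\<in>X. x < length \<sigma>"
  shows "contains (del {1..s} \<pi>) (\<sigma>, X) \<longleftrightarrow> (\<exists>is. occurrence \<pi> \<sigma> X is \<and> (\<forall>i\<in>set is. s \<le> i))"
proof
  assume "contains (del {1..s} \<pi>) (\<sigma>, X)"
  then obtain "is" where "occurrence (drop s \<pi>) \<sigma> X is"
    using occurrence_del_prefix[OF \<pi>] by (auto simp: contains_iff_occurrence)
  hence "occurrence \<pi> \<sigma> X (map ((+) s) is)" using occurrence_drop[OF X] by simp
  thus "\<exists>is. occurrence \<pi> \<sigma> X is \<and> (\<forall>i\<in>set is. s \<le> i)" by fastforce
next
  assume "\<exists>is. occurrence \<pi> \<sigma> X is \<and> (\<forall>i\<in>set is. s \<le> i)"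
  then obtain "is" where occ: "occurrence \<pi> \<sigma> X is" and late: "\<forall>i\<in>set is. s \<le> i" by blast
  have "map ((+) s) (map (\<lambda>i. i - s) is) = is" using late by (induction "is") auto
  hence "occurrence (drop s \<pi>) \<sigma> X (map (\<lambda>i. i - s) is)" using occ occurrence_drop[OF X] by metis
  thus "contains (del {1..s} \<pi>) (\<sigma>, X)"
    using occurrence_del_prefix[OF \<pi>] by (auto simp: contains_iff_occurrence)
qed

(* Under the hypothesis of the theorem, no occurrence of (sigma, {1..m-1}) in a permutation
   starting with w can start inside the first s positions: its first letters would make a factor
   p_a p_(a+1) ... of p order-isomorphic to a prefix of sigma. *)
lemma occurrence_starts_late:
  assumes hyp: "\<forall>a\<in>{1..s}. \<not> order_iso (take (min m (length p - a + 1)) (drop (a - 1) p))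
                                        (take (min m (length p - a + 1)) \<sigma>)"
    and s: "s \<le> length p" and wp: "order_iso w p" and prefix: "take (length p) \<pi> = w"
    and occ: "occurrence \<pi> \<sigma> {1..m - 1} is" and m: "0 < m" "m \<le> length \<sigma>"
  shows "s \<le> is ! 0"
proof (rule ccontr)
  assume early: "\<not> s \<le> is ! 0"
  define i0 where "i0 = is ! 0"
  define j where "j = min m (length p - i0)"
  have "order_iso (take m (drop i0 \<pi>)) (take m \<sigma>)"
    unfolding i0_def by (rule occurrence_initial_factor[OF occ m])
  hence "order_iso (take j (take m (drop i0 \<pi>))) (take j (take m \<sigma>))" by (rule order_iso_take)
  moreover have "j \<le> m" by (simp add: j_def)
  ultimately have in_\<pi>: "order_iso (take j (drop i0 \<pi>)) (take j \<sigma>)" by (simp add: min_absorb1)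
  have "take j (drop i0 w) = take j (drop i0 \<pi>)"
    unfolding prefix[symmetric] by (simp add: j_def drop_take)
  hence in_w: "order_iso (take j (drop i0 w)) (take j \<sigma>)" using in_\<pi> by simp
  have "order_iso (take j (drop i0 p)) (take j (drop i0 w))"
    using order_iso_take[OF order_iso_drop[OF order_iso_sym[OF wp]]] .
  hence "order_iso (take j (drop i0 p)) (take j \<sigma>)" using in_w by (rule order_iso_trans)
  moreover have "i0 + 1 \<in> {1..s}" and "length p - (i0 + 1) + 1 = length p - i0"
    using early s by (auto simp: i0_def)
  ultimately show False using hyp unfolding j_def by force
qed

(* Hence the occurrences of (sigma, {1..m-1}) in pi all avoid the first s positions, and deleting
   them preserves avoidance.  (The hypothesis for a = 1 also forces m > 0.) *)
lemma avoidance_preserved: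
  assumes hyp: "\<forall>a\<in>{1..s}. \<not> order_iso (take (min m (length p - a + 1)) (drop (a - 1) p))
                                        (take (min m (length p - a + 1)) \<sigma>)"
    and s: "1 \<le> s" "s \<le> length p" and m: "m \<le> length \<sigma>"
    and wp: "order_iso w p" and \<pi>: "distinct \<pi>" "take (length p) \<pi> = w"
  shows "avoids {(\<sigma>, {1..m - 1})} (del {1..s} \<pi>) = avoids {(\<sigma>, {1..m - 1})} \<pi>"
proof -
  have "m \<noteq> 0"
  proof
    assume "m = 0"
    moreover have "1 \<in> {1..s}" using s by simp
    ultimately show False using hyp by (auto simp: order_iso_def)
  qed
  have X: "\<forall>x\<in>{1..m - 1}. x < length \<sigma>" using m by auto
  have "contains \<pi> (\<sigma>, {1..m - 1}) \<longleftrightarrow>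
        (\<exists>is. occurrence \<pi> \<sigma> {1..m - 1} is \<and> (\<forall>i\<in>set is. s \<le> i))"
  proof (intro iffI)
    assume "contains \<pi> (\<sigma>, {1..m - 1})"
    then obtain "is" where occ: "occurrence \<pi> \<sigma> {1..m - 1} is"
      by (auto simp: contains_iff_occurrence)
    have "s \<le> is ! 0"
      using occurrence_starts_late[OF hyp s(2) wp \<pi>(2) occ] \<open>m \<noteq> 0\<close> m by simp
    moreover have "sorted_wrt (<) is" using occ by (simp add: occurrence_def)
    ultimately have "\<forall>i\<in>set is. s \<le> i" by (cases "is") auto
    with occ show "\<exists>is. occurrence \<pi> \<sigma> {1..m - 1} is \<and> (\<forall>i\<in>set is. s \<le> i)" by blast
  qed (auto simp: contains_iff_occurrence)
  thus ?thesis using contains_del_prefix_iff[OF \<pi>(1) X] by (simp add: avoids_def)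
qed

theorem mainTheorem11:
  fixes \<sigma> p :: "nat list" and t k s :: nat
  assumes "\<sigma> \<in> perms t" and "p \<in> perms k" and "1 \<le> s" and "s \<le> k"
  shows "((\<forall>a\<in>{1..s}. \<not> order_iso (take (min t (k - a + 1)) (drop (a - 1) p))
                                    (take (min t (k - a + 1)) \<sigma>))
           \<longrightarrow> rev_deletable {1..s} p {(\<sigma>, {1..t - 1})})
       \<and> ((\<forall>a\<in>{1..s}. \<not> order_iso (take (min (t - 1) (k - a + 1)) (drop (a - 1) p))
                                    (take (min (t - 1) (k - a + 1)) \<sigma>))
           \<longrightarrow> rev_deletable {1..s} p {(\<sigma>, {1..t - 2})})"
proof -
  have k: "length p = k" and t: "length \<sigma> = t" using assms(1,2) perms_length by auto
  have deletable: "rev_deletable {1..s} p {(\<sigma>, {1..m - 1})}"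
    if "m \<le> t" and hyp: "\<forall>a\<in>{1..s}. \<not> order_iso (take (min m (k - a + 1)) (drop (a - 1) p))
                                                (take (min m (k - a + 1)) \<sigma>)" for m
  proof (rule rev_deletable_prefixI)
    show "s \<le> length p" using assms(4) k by simp
    fix w \<pi> assume "order_iso w p" "distinct \<pi>" "take (length p) \<pi> = w"
    thus "avoids {(\<sigma>, {1..m - 1})} (del {1..s} \<pi>) = avoids {(\<sigma>, {1..m - 1})} \<pi>"
      using avoidance_preserved[of s m p \<sigma>] hyp assms(3,4) \<open>m \<le> t\<close> k t by simp
  qed
  have "t - 1 - 1 = t - 2" by simp
  thus ?thesis using deletable[of t] deletable[of "t - 1"] by auto
qed

end
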